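(* For all $z\in(0,+\infty)^{d_1}\times\{0\}^{d_2}$ and all $\alpha\ge0$, \[ \sigma^{\mathcal C}_\alpha(z):=\lim_{\lambda\to\infty,\ \lambda\in\mathbb{R}}\frac1\lambda\mathbb{E}\big[S^{\mathcal C}_\alpha(\lambda z)\big]=\sup_{\lambda>0}\frac1\lambda\mathbb{E}\big[S^{\mathcal C}_\alpha(\lambda z)\big]\in(0,\infty]. \]
   Context: Fix $d_1\ge1$, $d_2\ge0$. Let $\xi$ be a Poisson point process on $\mathbb{R}^{d_1}\times\mathbb{Z}^{d_2}$ with intensity $\mathrm{d}x\otimes\mathrm{d}v$ (Lebesgue measure on $\mathbb{R}^{d_1}$ times counting measure on $\mathbb{Z}^{d_2}$); its points are particles. $\mathrm{Proj}^{d_2}$ is the projection on the $\mathbb{Z}^{d_2}$ coordinates. For $x,y\in\mathbb{R}^{d_1}\times\mathbb{Z}^{d_2}$ and $\alpha\ge0$: $x\prec_\alpha y$ iff $x_i+\alpha^{1/d_1}<y_i$ for all $i\le d_1$; $x\preceq y$ iff $x_i\le y_i$ for all $i\le d_1$. For $z\in(0,+\infty)^{d_1}\times\{0\}^{d_2}$, $\mathcal{C}_\alpha(z)$ is the set of finite sequences $s=(w(1),\dots,w(k))$, $k\ge0$, of particles with $0\preceq w(1)\prec_\alpha\cdots\prec_\alpha w(k)\prec_\alpha z$; with $w(0)=0$, $w(k+1)=z$, $V(s)=\sum_{i=1}^{k+1}\|\mathrm{Proj}^{d_2}(w(i))-\mathrm{Proj}^{d_2}(w(i-1))\|_1$, $R(s)=k$,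 and $S^{\mathcal C}_\alpha(z)=\sup_{s\in\mathcal{C}_\alpha(z)}(R(s)-V(s))$. *)

theory Defs
  imports "HOL-Probability.Probability"
begin

text \<open>Points of R^d1 x Z^d2 are pairs (x, v) with x :: real^'d1 (d1 = CARD('d1))
  and v :: nat => int a lattice vector supported on the coordinates {..<d2}.\<close>

type_synonym 'd1 point = "(real^'d1) \<times> (nat \<Rightarrow> int)"

definition Zd :: "nat \<Rightarrow> (nat \<Rightarrow> int) set" where
  "Zd d2 = {v. \<forall>j\<ge>d2. v j = 0}"

definition l1norm :: "nat \<Rightarrow> (nat \<Rightarrow> int) \<Rightarrow> real" where
  "l1norm d2 v = (\<Sum>j<d2. real_of_int \<bar>v j\<bar>)"

definition poisson_prob :: "real \<Rightarrow> nat \<Rightarrow> real" where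
  "poisson_prob m k = exp (- m) * m ^ k / fact k"

text \<open>Poisson point process on R^d1 x Z^d2 with intensity Lebesgue x counting measure.\<close>

definition poisson_pp :: "'a measure \<Rightarrow> nat \<Rightarrow> ('a \<Rightarrow> ('d1::finite) point set) \<Rightarrow> bool" where
  "poisson_pp M d2 \<xi> \<longleftrightarrow>
     prob_space M \<and>
     (\<forall>\<omega>\<in>space M. \<xi> \<omega> \<subseteq> UNIV \<times> Zd d2 \<and>
        (\<forall>B v. bounded B \<longrightarrow> finite (\<xi> \<omega> \<inter> (B \<times> {v})))) \<and>
     (\<forall>(I::nat set) (Bs::nat \<Rightarrow> (real^'d1) set) vs.
        finite I \<and> (\<forall>i\<in>I. Bs i \<in> sets lborel \<and> bounded (Bs i) \<and> vs i \<in> Zd d2) \<and>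
        disjoint_family_on (\<lambda>i. Bs i \<times> {vs i}) I \<longrightarrow>
        prob_space.indep_vars M (\<lambda>_. count_space UNIV)
          (\<lambda>i \<omega>. card (\<xi> \<omega> \<inter> (Bs i \<times> {vs i}))) I) \<and>
     (\<forall>B v k. B \<in> sets lborel \<and> bounded B \<and> v \<in> Zd d2 \<longrightarrow>
        measure M {\<omega>\<in>space M. card (\<xi> \<omega> \<inter> (B \<times> {v})) = k}
          = poisson_prob (measure lborel B) k)"

definition prec :: "real \<Rightarrow> ('d1::finite) point \<Rightarrow> 'd1 point \<Rightarrow> bool" where
  "prec \<alpha> x y \<longleftrightarrow> (\<forall>i. fst x $ i + \<alpha> powr (1 / real CARD('d1)) < fst y $ i)"

definition preceq :: "('d1::finite) point \<Rightarrow> 'd1 point \<Rightarrow> bool" where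
  "preceq x y \<longleftrightarrow> (\<forall>i. fst x $ i \<le> fst y $ i)"

definition chains :: "real \<Rightarrow> ('d1::finite) point set \<Rightarrow> 'd1 point \<Rightarrow> 'd1 point list set" where
  "chains \<alpha> X z = {ws. set ws \<subseteq> X \<and>
      (ws \<noteq> [] \<longrightarrow> preceq (0, (\<lambda>_. 0)) (hd ws) \<and> prec \<alpha> (last ws) z) \<and>
      (\<forall>i. Suc i < length ws \<longrightarrow> prec \<alpha> (ws ! i) (ws ! Suc i))}"

definition Vcost :: "nat \<Rightarrow> ('d1::finite) point \<Rightarrow> 'd1 point list \<Rightarrow> real" where
  "Vcost d2 z ws = (let ps = (0, (\<lambda>_. 0)) # ws @ [z] in
      (\<Sum>i<length ps - 1. l1norm d2 (\<lambda>j. snd (ps ! Suc i) j - snd (ps ! i) j)))"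

definition SC :: "nat \<Rightarrow> real \<Rightarrow> ('d1::finite) point set \<Rightarrow> 'd1 point \<Rightarrow> ereal" where
  "SC d2 \<alpha> X z = (SUP ws \<in> chains \<alpha> X z. ereal (real (length ws) - Vcost d2 z ws))"

text \<open>E[S^C_alpha(z)] (S^C_alpha(z) >= 0, witnessed by the empty sequence).\<close>
definition ESC :: "'a measure \<Rightarrow> nat \<Rightarrow> ('a \<Rightarrow> ('d1::finite) point set) \<Rightarrow> real \<Rightarrow> 'd1 point \<Rightarrow> ennreal" where
  "ESC M d2 \<xi> \<alpha> z = (\<integral>\<^sup>+ \<omega>. e2ennreal (SC d2 \<alpha> (\<xi> \<omega>) z) \<partial>M)"

end

theory Submission
  imports Defs
begin

(* Concatenating a chain to a with the translate by a of a chain to b gives a chain to a + b,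
   and by the triangle inequality at the junction its lattice cost is at most the sum of the
   two costs; so S(a) + S(b, shifted configuration) <= S(a + b) pathwise. The shifted Poisson
   process has the same law, hence t |-> E S(t x) is superadditive and Fekete's lemma gives the
   convergence of E S(t x) / t to its supremum. Translation invariance of the expectation is
   obtained by approximating S by the monotone limit of suprema over chains living on dyadic
   cells in a finite window: these only depend on finitely many cell counts, which are
   independent Poisson variables whose means do not change under translation. Positivity: with
   positive probability a particle at lattice height 0 lies in the unit box, and alone it is a
   chain of reward 1 to t x for t large. *)

section \<open>Lattice cost of paths and concatenation of chains\<close>

fun path_cost :: "nat \<Rightarrow> (nat \<Rightarrow> int) list \<Rightarrow> real" where
  "path_cost d2 (u # v # vs) = l1norm d2 (\<lambda>j. v j - u j) + path_cost d2 (v # vs)"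
| "path_cost d2 _ = 0"

lemma l1norm_nonneg: "0 \<le> l1norm d2 v"
  unfolding l1norm_def by (simp add: sum_nonneg)

lemma l1norm_diff_triangle:
  "l1norm d2 (\<lambda>j. w j - u j) \<le> l1norm d2 (\<lambda>j. v j - u j) + l1norm d2 (\<lambda>j. w j - v j)"
  unfolding l1norm_def sum.distrib[symmetric] by (intro sum_mono) linarith

lemma sum_consecutive_l1norm_eq_path_cost:
  "(\<Sum>i<length ps - 1. l1norm d2 (\<lambda>j. snd (ps ! Suc i) j - snd (ps ! i) j)) = path_cost d2 (map snd ps)"
proof (induction ps rule: induct_list012)
  case (3 p q ps)
  then show ?case
    by (simp only: length_Cons diff_Suc_1 sum.lessThan_Suc_shift) simp
qed simp_all

lemma Vcost_eq_path_cost: "Vcost d2 z ws = path_cost d2 (map snd ((0, \<lambda>_. 0) # ws @ [z]))"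
  unfolding Vcost_def Let_def sum_consecutive_l1norm_eq_path_cost ..

lemma Vcost_cong_snd: "map snd ws = map snd ws' \<Longrightarrow> snd z = snd z' \<Longrightarrow> Vcost d2 z ws = Vcost d2 z' ws'"
  unfolding Vcost_eq_path_cost by simp

lemma path_cost_append_split: "path_cost d2 (us @ [v]) + path_cost d2 (v # ws) = path_cost d2 (us @ v # ws)"
  by (induction us rule: induct_list012) auto

lemma path_cost_le_insert: "path_cost d2 (us @ ws) \<le> path_cost d2 (us @ v # ws)"
proof (induction us rule: induct_list012)
  case 1
  show ?case by (cases ws) (auto simp: l1norm_nonneg)
next
  case (2 u)
  show ?case by (cases ws) (auto simp: l1norm_nonneg l1norm_diff_triangle)
qed simp

lemma Vcost_append_le:
  "Vcost d2 (c, \<lambda>_. 0) (ws1 @ ws2) \<le> Vcost d2 (a, \<lambda>_. 0) ws1 + Vcost d2 (b, \<lambda>_. 0) ws2"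
proof -
  let ?o = "\<lambda>_::nat. 0::int"
  have "Vcost d2 (c, ?o) (ws1 @ ws2) = path_cost d2 ((?o # map snd ws1) @ map snd ws2 @ [?o])"
    unfolding Vcost_eq_path_cost by simp
  also have "\<dots> \<le> path_cost d2 ((?o # map snd ws1) @ ?o # map snd ws2 @ [?o])"
    by (rule path_cost_le_insert)
  also have "\<dots> = path_cost d2 ((?o # map snd ws1) @ [?o]) + path_cost d2 (?o # map snd ws2 @ [?o])"
    by (rule path_cost_append_split[symmetric])
  also have "\<dots> = Vcost d2 (a, ?o) ws1 + Vcost d2 (b, ?o) ws2"
    unfolding Vcost_eq_path_cost by simp
  finally show ?thesis .
qed

lemma chains_iff:
  "ws \<in> chains \<alpha> X z \<longleftrightarrow> set ws \<subseteq> X \<and>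
     (ws \<noteq> [] \<longrightarrow> preceq (0, \<lambda>_. 0) (hd ws) \<and> prec \<alpha> (last ws) z) \<and> successively (prec \<alpha>) ws"
  unfolding chains_def successively_conv_nth by simp

lemma Nil_in_chains: "[] \<in> chains \<alpha> X z"
  by (simp add: chains_def)

lemma SC_ge_chain: "ws \<in> chains \<alpha> X z \<Longrightarrow> ereal (real (length ws) - Vcost d2 z ws) \<le> SC d2 \<alpha> X z"
  unfolding SC_def by (rule SUP_upper)

lemma SC_nonneg: "0 \<le> SC d2 \<alpha> X (a, \<lambda>_. 0)"
  using SC_ge_chain[OF Nil_in_chains, where z="(a, \<lambda>_. 0)"] by (simp add: Vcost_eq_path_cost l1norm_def zero_ereal_def)

lemma chains_nonneg:
  assumes "\<alpha> \<ge> 0" "ws \<in> chains \<alpha> X z" "w \<in> set ws"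
  shows "0 \<le> fst w $ l"
proof -
  have "0 \<le> fst (ws ! i) $ l" if "i < length ws" for i
    using that
  proof (induction i)
    case 0
    then show ?case using assms(2) by (auto simp: chains_def preceq_def hd_conv_nth)
  next
    case (Suc i)
    then have "fst (ws ! i) $ l + \<alpha> powr (1 / real CARD('a)) < fst (ws ! Suc i) $ l"
      using assms(2) by (simp add: chains_def prec_def)
    with Suc show ?case by (smt (verit) powr_ge_zero Suc_lessD)
  qed
  then show ?thesis using assms(3) by (metis in_set_conv_nth)
qed

definition shift_config :: "real^'d1 \<Rightarrow> ('d1::finite) point set \<Rightarrow> 'd1 point set" where
  "shift_config a X = (\<lambda>w. (fst w - a, snd w)) ` X"

lemma shift_config_0 [simp]: "shift_config 0 X = X"
  unfolding shift_config_def by (auto simp: image_iff)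

lemma chains_append_shift:
  assumes a: "\<forall>i. 0 \<le> a $ i" and b: "\<forall>i. 0 \<le> b $ i"
    and ws1: "ws1 \<in> chains \<alpha> X (a, \<lambda>_. 0)" and ws2: "ws2 \<in> chains \<alpha> (shift_config a X) (b, \<lambda>_. 0)"
  shows "ws1 @ map (\<lambda>w. (fst w + a, snd w)) ws2 \<in> chains \<alpha> X (a + b, \<lambda>_. 0)"
proof -
  let ?u = "\<lambda>w::'a point. (fst w + a, snd w)"
  have s1: "set ws1 \<subseteq> X" "ws1 \<noteq> [] \<Longrightarrow> preceq (0, \<lambda>_. 0) (hd ws1) \<and> prec \<alpha> (last ws1) (a, \<lambda>_. 0)"
     "successively (prec \<alpha>) ws1" using ws1 unfolding chains_iff by auto
  have s2: "set ws2 \<subseteq> shift_config a X" "ws2 \<noteq> [] \<Longrightarrow> preceq (0, \<lambda>_. 0) (hd ws2) \<and> prec \<alpha> (last ws2) (b, \<lambda>_. 0)"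
     "successively (prec \<alpha>) ws2" using ws2 unfolding chains_iff by auto
  have "set (ws1 @ map ?u ws2) \<subseteq> X"
    using s1(1) s2(1) by (auto simp: shift_config_def)
  moreover have "successively (prec \<alpha>) (ws1 @ map ?u ws2)"
  proof -
    have "prec \<alpha> (last ws1) (hd (map ?u ws2))" if "ws1 \<noteq> []" "ws2 \<noteq> []"
      using s1(2)[OF that(1)] s2(2)[OF that(2)] that
      unfolding prec_def preceq_def by (auto simp: hd_map intro: less_le_trans)
    then show ?thesis
      using s1(3) s2(3) by (auto simp: successively_append_iff successively_map prec_def)
  qed
  moreover have "preceq (0, \<lambda>_. 0) (hd (ws1 @ map ?u ws2))" if "ws1 @ map ?u ws2 \<noteq> []"
    using that s1(2) s2(2) a unfolding preceq_def
    by (cases "ws1 = []") (auto simp: hd_map add_nonneg_nonneg)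
  moreover have "prec \<alpha> (last (ws1 @ map ?u ws2)) (a + b, \<lambda>_. 0)" if "ws1 @ map ?u ws2 \<noteq> []"
  proof (cases "ws2 = []")
    case True
    then show ?thesis using that s1(2) b unfolding prec_def by (auto intro: less_le_trans add_increasing2)
  next
    case False
    then show ?thesis using s2(2) unfolding prec_def by (auto simp: last_map add.commute)
  qed
  ultimately show ?thesis unfolding chains_iff by blast
qed

lemma SC_superadditive:
  assumes a: "\<forall>i. 0 \<le> a $ i" and b: "\<forall>i. 0 \<le> b $ i"
  shows "SC d2 \<alpha> X (a, \<lambda>_. 0) + SC d2 \<alpha> (shift_config a X) (b, \<lambda>_. 0) \<le> SC d2 \<alpha> X (a + b, \<lambda>_. 0)"
proof -
  let ?r = "\<lambda>c ws. ereal (real (length ws) - Vcost d2 (c, \<lambda>_. 0) ws)"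
  let ?A = "chains \<alpha> X (a, \<lambda>_. 0)" and ?B = "chains \<alpha> (shift_config a X) (b, \<lambda>_. 0)"
  have upper: "?r a ws1 + ?r b ws2 \<le> SC d2 \<alpha> X (a + b, \<lambda>_. 0)" if "ws1 \<in> ?A" "ws2 \<in> ?B" for ws1 ws2
  proof -
    let ?ws = "ws1 @ map (\<lambda>w. (fst w + a, snd w)) ws2"
    have "Vcost d2 (a + b, \<lambda>_. 0) ?ws = Vcost d2 (a + b, \<lambda>_. 0) (ws1 @ ws2)"
      by (rule Vcost_cong_snd) (simp_all add: comp_def)
    also have "\<dots> \<le> Vcost d2 (a, \<lambda>_. 0) ws1 + Vcost d2 (b, \<lambda>_. 0) ws2"
      by (rule Vcost_append_le)
    finally have "?r a ws1 + ?r b ws2 \<le> ?r (a + b) ?ws"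
      by simp
    also have "\<dots> \<le> SC d2 \<alpha> X (a + b, \<lambda>_. 0)"
      by (intro SC_ge_chain chains_append_shift a b that)
    finally show ?thesis .
  qed
  have "?B \<noteq> {}"
    using Nil_in_chains by blast
  then have "?r a ws1 + SC d2 \<alpha> (shift_config a X) (b, \<lambda>_. 0) \<le> SC d2 \<alpha> X (a + b, \<lambda>_. 0)"
    if "ws1 \<in> ?A" for ws1
    using upper[OF that] unfolding SC_def[of d2 \<alpha> "shift_config a X"]
    by (subst SUP_ereal_add_right[symmetric]) (auto intro: SUP_least)
  moreover have "?A \<noteq> {}"
    using Nil_in_chains by blast
  moreover have "SC d2 \<alpha> (shift_config a X) (b, \<lambda>_. 0) \<noteq> -\<infinity>"
    using SC_nonneg[of d2 \<alpha> "shift_config a X" b] by auto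
  ultimately show ?thesis
    unfolding SC_def[of d2 \<alpha> X "(a, \<lambda>_. 0)"]
    by (subst SUP_ereal_add_left[symmetric]) (auto intro: SUP_least)
qed

section \<open>Dyadic approximation\<close>

definition dyadic_index :: "nat \<Rightarrow> ('d1::finite) point \<Rightarrow> ('d1 \<Rightarrow> int) \<times> (nat \<Rightarrow> int)" where
  "dyadic_index n w = ((\<lambda>i. \<lfloor>2^n * fst w $ i\<rfloor>), snd w)"

text \<open>The bound \<open>n + 1\<close> rather than \<open>n\<close> keeps the window nonempty at level 0.\<close>

definition window :: "nat \<Rightarrow> nat \<Rightarrow> (('d1::finite \<Rightarrow> int) \<times> (nat \<Rightarrow> int)) set" where
  "window d2 n = {j. (\<forall>i. 0 \<le> fst j i \<and> fst j i < int (Suc n) * 2^n) \<and> snd j \<in> Zd d2 \<and> (\<forall>l. \<bar>snd j l\<bar> \<le> int n)}"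

text \<open>Chains whose consecutive cells are separated in this strong sense are chains,
  increase with \<open>n\<close>, and only depend on which cells of the window are occupied.\<close>

definition cell_precedes :: "real \<Rightarrow> nat \<Rightarrow> ('d1::finite \<Rightarrow> int) \<Rightarrow> ('d1 \<Rightarrow> real) \<Rightarrow> bool" where
  "cell_precedes c n k y \<longleftrightarrow> (\<forall>i. (real_of_int (k i) + 1) / 2^n + c \<le> y i)"

definition cell_lower :: "nat \<Rightarrow> ('d1::finite \<Rightarrow> int) \<Rightarrow> 'd1 \<Rightarrow> real" where
  "cell_lower n k = (\<lambda>i. real_of_int (k i) / 2^n)"

definition dyadic_chains :: "nat \<Rightarrow> real \<Rightarrow> nat \<Rightarrow> ('d1::finite) point set \<Rightarrow> 'd1 point \<Rightarrow> 'd1 point list set" where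
  "dyadic_chains d2 \<alpha> n X z = {ws. set ws \<subseteq> X \<and> (\<forall>w\<in>set ws. dyadic_index n w \<in> window d2 n) \<and>
     (\<forall>i. Suc i < length ws \<longrightarrow> cell_precedes (\<alpha> powr (1 / real CARD('d1))) n
        (fst (dyadic_index n (ws ! i))) (cell_lower n (fst (dyadic_index n (ws ! Suc i))))) \<and>
     (ws \<noteq> [] \<longrightarrow> cell_precedes (\<alpha> powr (1 / real CARD('d1))) n (fst (dyadic_index n (last ws))) (($) (fst z)))}"

definition SC_dyadic :: "nat \<Rightarrow> real \<Rightarrow> nat \<Rightarrow> ('d1::finite) point set \<Rightarrow> 'd1 point \<Rightarrow> ereal" where
  "SC_dyadic d2 \<alpha> n X z = (SUP ws \<in> dyadic_chains d2 \<alpha> n X z. ereal (real (length ws) - Vcost d2 z ws))"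

lemma floor_dyadic_le: "real_of_int \<lfloor>2^n * y\<rfloor> / 2^n \<le> (y::real)"
  by (simp add: divide_le_eq mult.commute)

lemma less_floor_dyadic_succ: "(y::real) < (real_of_int \<lfloor>2^n * y\<rfloor> + 1) / 2^n"
  by (simp add: less_divide_eq mult.commute)

lemma floor_dyadic_mono:
  assumes "m \<le> n"
  shows "real_of_int \<lfloor>2^m * y\<rfloor> / 2^m \<le> real_of_int \<lfloor>2^n * (y::real)\<rfloor> / 2^n"
proof -
  obtain d where n: "n = d + m" using assms le_Suc_ex by (metis add.commute)
  have "2^d * \<lfloor>2^m * y\<rfloor> \<le> \<lfloor>2^n * y\<rfloor>"
    unfolding le_floor_iff
    using mult_left_mono[OF of_int_floor_le[of "2^m * y"], of "2^d"] by (simp add: n power_add)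
  then have "2^d * real_of_int \<lfloor>2^m * y\<rfloor> \<le> real_of_int \<lfloor>2^n * y\<rfloor>"
    by (metis of_int_le_iff of_int_mult of_int_numeral of_int_power)
  then show ?thesis
    by (simp add: n power_add field_simps)
qed

lemma floor_dyadic_succ_antimono:
  assumes "m \<le> n"
  shows "(real_of_int \<lfloor>2^n * (y::real)\<rfloor> + 1) / 2^n \<le> (real_of_int \<lfloor>2^m * y\<rfloor> + 1) / 2^m"
proof -
  obtain d where n: "n = d + m" using assms le_Suc_ex by (metis add.commute)
  have "\<lfloor>2^n * y\<rfloor> < 2^d * (\<lfloor>2^m * y\<rfloor> + 1)"
    unfolding floor_less_iff
    using mult_strict_left_mono[OF real_of_int_floor_add_one_gt[of "2^m * y"], of "2^d"]
    by (simp add: n power_add)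
  then have "real_of_int (\<lfloor>2^n * y\<rfloor> + 1) \<le> real_of_int (2^d * (\<lfloor>2^m * y\<rfloor> + 1))"
    by (simp only: of_int_le_iff)
  then have "real_of_int \<lfloor>2^n * y\<rfloor> + 1 \<le> 2^d * (real_of_int \<lfloor>2^m * y\<rfloor> + 1)"
    by simp
  then have "(real_of_int \<lfloor>2^n * y\<rfloor> + 1) / 2^n \<le> 2^d * (real_of_int \<lfloor>2^m * y\<rfloor> + 1) / 2^n"
    by (rule divide_right_mono) simp
  also have "\<dots> = (real_of_int \<lfloor>2^m * y\<rfloor> + 1) / 2^m"
    by (simp add: n power_add)
  finally show ?thesis .
qed

lemma floor_dyadic_nonneg_iff: "0 \<le> \<lfloor>2^n * y\<rfloor> \<longleftrightarrow> 0 \<le> (y::real)"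
  by (metis mult_zero_right mult_le_cancel_left_pos zero_le_floor zero_less_numeral zero_less_power)

lemma floor_dyadic_less_iff: "\<lfloor>2^n * y\<rfloor> < int m * 2^n \<longleftrightarrow> (y::real) < real m"
  by (simp add: floor_less_iff mult.commute)

lemma dyadic_index_in_window_iff:
  "dyadic_index n w \<in> window d2 n \<longleftrightarrow>
     (\<forall>i. 0 \<le> fst w $ i \<and> fst w $ i < real (Suc n)) \<and> snd w \<in> Zd d2 \<and> (\<forall>l. \<bar>snd w l\<bar> \<le> int n)"
  unfolding window_def dyadic_index_def
  by (simp only: mem_Collect_eq fst_conv snd_conv floor_dyadic_nonneg_iff floor_dyadic_less_iff)

lemma eventually_floor_dyadic_gap:
  assumes "a + c < (b::real)"
  shows "\<forall>\<^sub>F n in sequentially. (real_of_int \<lfloor>2^n * a\<rfloor> + 1) / 2^n + c \<le> real_of_int \<lfloor>2^n * b\<rfloor> / 2^n"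
proof -
  have "(\<lambda>n. 2 / (2::real) ^ n) \<longlonglongrightarrow> 0"
    by (intro tendsto_divide_0[OF tendsto_const] filterlim_realpow_sequentially_gt1) simp
  then have "\<forall>\<^sub>F n in sequentially. 2 / (2::real) ^ n < b - a - c"
    using assms by (intro order_tendstoD(2)) auto
  then show ?thesis
  proof (rule eventually_mono)
    fix n :: nat
    have "(real_of_int \<lfloor>2^n * a\<rfloor> + 1) / 2^n \<le> a + 1 / 2^n"
      using floor_dyadic_le[of n a] by (simp add: add_divide_distrib)
    moreover have "b - 1 / 2^n = (2^n * b - 1) / 2^n"
      by (simp add: field_simps)
    moreover have "(2^n * b - 1) / 2^n \<le> real_of_int \<lfloor>2^n * b\<rfloor> / 2^n"
      using real_of_int_floor_gt_diff_one[of "2^n * b"] by (intro divide_right_mono) auto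
    moreover assume "2 / (2::real) ^ n < b - a - c"
    ultimately show "(real_of_int \<lfloor>2^n * a\<rfloor> + 1) / 2^n + c \<le> real_of_int \<lfloor>2^n * b\<rfloor> / 2^n"
      by simp
  qed
qed

lemma dyadic_chains_subset_chains: "dyadic_chains d2 \<alpha> n X z \<subseteq> chains \<alpha> X z"
proof
  fix ws assume ws: "ws \<in> dyadic_chains d2 \<alpha> n X z"
  let ?c = "\<alpha> powr (1 / real CARD('a))"
  have prec_upper: "prec \<alpha> w y" if "cell_precedes ?c n (fst (dyadic_index n w)) (($) (fst y))" for w y :: "'a point"
    unfolding prec_def
  proof
    fix i
    show "fst w $ i + ?c < fst y $ i"
      using that less_floor_dyadic_succ[of "fst w $ i" n]
      unfolding cell_precedes_def dyadic_index_def fst_conv by (smt (verit))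
  qed
  have prec_lower: "prec \<alpha> w y" if "cell_precedes ?c n (fst (dyadic_index n w)) (cell_lower n (fst (dyadic_index n y)))"
    for w y :: "'a point"
  proof (rule prec_upper)
    show "cell_precedes ?c n (fst (dyadic_index n w)) (($) (fst y))"
      using that floor_dyadic_le[of n] unfolding cell_precedes_def cell_lower_def dyadic_index_def fst_conv
      by (smt (verit))
  qed
  have "0 \<le> fst w $ i" if "w \<in> set ws" for w i
    using ws that by (auto simp: dyadic_chains_def dyadic_index_in_window_iff)
  then show "ws \<in> chains \<alpha> X z"
    using ws prec_upper prec_lower by (auto simp: chains_def dyadic_chains_def preceq_def)
qed

lemma dyadic_chains_mono:
  assumes "m \<le> n"
  shows "dyadic_chains d2 \<alpha> m X z \<subseteq> dyadic_chains d2 \<alpha> n X z"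
proof -
  let ?c = "\<alpha> powr (1 / real CARD('a))"
  have window: "dyadic_index n w \<in> window d2 n" if "dyadic_index m w \<in> window d2 m" for w :: "'a point"
  proof -
    have "real (Suc m) \<le> real (Suc n)" "int m \<le> int n"
      using assms by simp_all
    with that show ?thesis
      unfolding dyadic_index_in_window_iff by (meson less_le_trans order_trans)
  qed
  have shrink: "cell_precedes ?c n (fst (dyadic_index n w)) y" if "cell_precedes ?c m (fst (dyadic_index m w)) y"
    for w :: "'a point" and y
    unfolding cell_precedes_def dyadic_index_def fst_conv
  proof
    fix i
    show "(real_of_int \<lfloor>2^n * fst w $ i\<rfloor> + 1) / 2^n + ?c \<le> y i"
      using that floor_dyadic_succ_antimono[OF assms, of "fst w $ i"]
      unfolding cell_precedes_def dyadic_index_def fst_conv by (smt (verit))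
  qed
  have lower: "cell_precedes ?c n k (cell_lower n (fst (dyadic_index n w)))"
    if "cell_precedes ?c n k (cell_lower m (fst (dyadic_index m w)))" for k and w :: "'a point"
    unfolding cell_precedes_def cell_lower_def dyadic_index_def fst_conv
  proof
    fix i
    show "(real_of_int (k i) + 1) / 2^n + ?c \<le> real_of_int \<lfloor>2^n * fst w $ i\<rfloor> / 2^n"
      using that floor_dyadic_mono[OF assms, of "fst w $ i"]
      unfolding cell_precedes_def cell_lower_def dyadic_index_def fst_conv by (smt (verit))
  qed
  have "cell_precedes ?c n (fst (dyadic_index n v)) (cell_lower n (fst (dyadic_index n w)))"
    if "cell_precedes ?c m (fst (dyadic_index m v)) (cell_lower m (fst (dyadic_index m w)))" for v w :: "'a point"
    using lower shrink that by blast
  with window shrink show ?thesis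
    unfolding dyadic_chains_def by blast
qed

lemma eventually_dyadic_index_in_window:
  assumes "snd w \<in> Zd d2" "\<forall>i. 0 \<le> fst w $ i"
  shows "\<forall>\<^sub>F n in sequentially. dyadic_index n w \<in> window d2 n"
proof -
  have large: "\<forall>\<^sub>F n in sequentially. y < real n" for y :: real
    by (rule eventually_compose_filterlim[OF eventually_gt_at_top filterlim_real_sequentially])
  define B where "B = (\<Sum>l<d2. \<bar>snd w l\<bar>)"
  have bound: "\<bar>snd w l\<bar> \<le> B" for l
    using assms(1) unfolding B_def by (cases "l < d2") (auto simp: Zd_def intro: member_le_sum sum_nonneg)
  have "\<forall>\<^sub>F n in sequentially. fst w $ i < real (Suc n)" for i
    using large[of "fst w $ i"] by (rule eventually_mono) simp
  moreover have "\<forall>\<^sub>F n in sequentially. B \<le> int n"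
    using large[of "real_of_int B"] by (rule eventually_mono) linarith
  ultimately have "\<forall>\<^sub>F n in sequentially. (\<forall>i. fst w $ i < real (Suc n)) \<and> B \<le> int n"
    by (intro eventually_conj eventually_all_finite allI)
  then show ?thesis
  proof (rule eventually_mono)
    fix n assume n: "(\<forall>i. fst w $ i < real (Suc n)) \<and> B \<le> int n"
    then have "\<bar>snd w l\<bar> \<le> int n" for l
      using bound[of l] by linarith
    with n show "dyadic_index n w \<in> window d2 n"
      using assms by (simp add: dyadic_index_in_window_iff)
  qed
qed

lemma eventually_in_dyadic_chains:
  assumes "\<alpha> \<ge> 0" "X \<subseteq> UNIV \<times> Zd d2" "ws \<in> chains \<alpha> X z"
  shows "\<forall>\<^sub>F n in sequentially. ws \<in> dyadic_chains d2 \<alpha> n X z"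
proof -
  let ?c = "\<alpha> powr (1 / real CARD('a))"
  have sub: "set ws \<subseteq> X" using assms(3) by (simp add: chains_def)
  have "\<forall>\<^sub>F n in sequentially. dyadic_index n w \<in> window d2 n" if "w \<in> set ws" for w
    using that sub assms(2) chains_nonneg[OF assms(1,3) that] by (intro eventually_dyadic_index_in_window) auto
  then have "\<forall>\<^sub>F n in sequentially. \<forall>w\<in>set ws. dyadic_index n w \<in> window d2 n"
    by (simp add: eventually_ball_finite)
  moreover have "\<forall>\<^sub>F n in sequentially. \<forall>i\<in>{i. Suc i < length ws}.
      cell_precedes ?c n (fst (dyadic_index n (ws ! i))) (cell_lower n (fst (dyadic_index n (ws ! Suc i))))"
  proof (intro eventually_ball_finite ballI)
    fix i assume "i \<in> {i. Suc i < length ws}"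
    then have "fst (ws ! i) $ l + ?c < fst (ws ! Suc i) $ l" for l
      using assms(3) by (simp add: chains_def prec_def)
    then show "\<forall>\<^sub>F n in sequentially. cell_precedes ?c n (fst (dyadic_index n (ws ! i))) (cell_lower n (fst (dyadic_index n (ws ! Suc i))))"
      unfolding cell_precedes_def cell_lower_def dyadic_index_def fst_conv
      by (intro eventually_all_finite eventually_floor_dyadic_gap)
  qed (rule finite_subset[of _ "{..<length ws}"]; auto)
  moreover have "\<forall>\<^sub>F n in sequentially. ws \<noteq> [] \<longrightarrow> cell_precedes ?c n (fst (dyadic_index n (last ws))) (($) (fst z))"
  proof (cases "ws = []")
    case False
    then have "fst (last ws) $ l + ?c < fst z $ l" for l
      using assms(3) by (simp add: chains_def prec_def)
    then have "\<forall>\<^sub>F n in sequentially. \<forall>l. (real_of_int \<lfloor>2^n * fst (last ws) $ l\<rfloor> + 1) / 2^n + ?c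
        \<le> real_of_int \<lfloor>2^n * fst z $ l\<rfloor> / 2^n"
      by (intro eventually_all_finite eventually_floor_dyadic_gap)
    then show ?thesis
      by (rule eventually_mono) (auto simp: cell_precedes_def dyadic_index_def intro: order_trans floor_dyadic_le)
  qed simp
  ultimately show ?thesis
    by eventually_elim (use sub in \<open>auto simp: dyadic_chains_def\<close>)
qed

lemma incseq_SC_dyadic: "incseq (\<lambda>n. SC_dyadic d2 \<alpha> n X z)"
  unfolding incseq_def SC_dyadic_def by (intro allI impI SUP_subset_mono dyadic_chains_mono order_refl)

lemma SC_eq_SUP_SC_dyadic:
  assumes "\<alpha> \<ge> 0" "X \<subseteq> UNIV \<times> Zd d2"
  shows "SC d2 \<alpha> X z = (SUP n. SC_dyadic d2 \<alpha> n X z)"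
proof (rule antisym)
  show "SC d2 \<alpha> X z \<le> (SUP n. SC_dyadic d2 \<alpha> n X z)"
    unfolding SC_def
  proof (rule SUP_least)
    fix ws assume "ws \<in> chains \<alpha> X z"
    then obtain n where "ws \<in> dyadic_chains d2 \<alpha> n X z"
      using eventually_in_dyadic_chains[OF assms] unfolding eventually_sequentially by blast
    then have "ereal (real (length ws) - Vcost d2 z ws) \<le> SC_dyadic d2 \<alpha> n X z"
      unfolding SC_dyadic_def by (rule SUP_upper)
    then show "ereal (real (length ws) - Vcost d2 z ws) \<le> (SUP n. SC_dyadic d2 \<alpha> n X z)"
      by (meson SUP_upper2 UNIV_I)
  qed
  show "(SUP n. SC_dyadic d2 \<alpha> n X z) \<le> SC d2 \<alpha> X z"
    unfolding SC_def SC_dyadic_def by (intro SUP_least SUP_subset_mono dyadic_chains_subset_chains order_refl)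
qed

lemma e2ennreal_SC_eq_SUP_SC_dyadic:
  assumes "\<alpha> \<ge> 0" "X \<subseteq> UNIV \<times> Zd d2"
  shows "e2ennreal (SC d2 \<alpha> X z) = (SUP n. e2ennreal (SC_dyadic d2 \<alpha> n X z))"
  unfolding SC_eq_SUP_SC_dyadic[OF assms]
  by (rule sup_continuousD[OF sup_continuous_e2ennreal[OF sup_continuous_id]]) (use incseq_SC_dyadic in \<open>simp add: mono_def incseq_def\<close>)

lemma dyadic_chains_transfer:
  assumes "ws \<in> dyadic_chains d2 \<alpha> n X z" "map (dyadic_index n) ws' = map (dyadic_index n) ws" "set ws' \<subseteq> Y"
  shows "ws' \<in> dyadic_chains d2 \<alpha> n Y z"
proof -
  have len: "length ws' = length ws"
    using assms(2) by (metis length_map)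
  have nth: "dyadic_index n (ws' ! i) = dyadic_index n (ws ! i)" if "i < length ws" for i
    using assms(2) that len by (metis nth_map)
  have set: "dyadic_index n ` set ws' = dyadic_index n ` set ws"
    using assms(2) by (metis set_map)
  have last: "dyadic_index n (last ws') = dyadic_index n (last ws)" if "ws \<noteq> []"
    using assms(2) that len by (metis last_map length_0_conv)
  show ?thesis
    unfolding dyadic_chains_def
  proof (intro CollectI conjI allI impI ballI)
    show "set ws' \<subseteq> Y" by (rule assms(3))
  next
    fix w assume "w \<in> set ws'"
    then have "dyadic_index n w \<in> dyadic_index n ` set ws"
      unfolding set[symmetric] by (rule imageI)
    then obtain w0 where "w0 \<in> set ws" "dyadic_index n w = dyadic_index n w0"
      by (rule imageE)
    then show "dyadic_index n w \<in> window d2 n"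
      using assms(1) by (simp add: dyadic_chains_def)
  next
    fix i assume "Suc i < length ws'"
    then show "cell_precedes (\<alpha> powr (1 / real CARD('a))) n (fst (dyadic_index n (ws' ! i)))
        (cell_lower n (fst (dyadic_index n (ws' ! Suc i))))"
      using assms(1) len nth[of i] nth[of "Suc i"] by (simp add: dyadic_chains_def)
  next
    assume "ws' \<noteq> []"
    then have "ws \<noteq> []"
      using len by auto
    then show "cell_precedes (\<alpha> powr (1 / real CARD('a))) n (fst (dyadic_index n (last ws'))) (($) (fst z))"
      using assms(1) last by (simp add: dyadic_chains_def)
  qed
qed

lemma snd_eq_if_dyadic_index_eq: "dyadic_index n v = dyadic_index n w \<Longrightarrow> snd v = snd w"
  unfolding dyadic_index_def by (metis snd_conv)

lemma SC_dyadic_le_if_cells_covered: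
  assumes "\<forall>w\<in>X. dyadic_index n w \<in> window d2 n \<longrightarrow> (\<exists>y\<in>Y. dyadic_index n y = dyadic_index n w)"
  shows "SC_dyadic d2 \<alpha> n X z \<le> SC_dyadic d2 \<alpha> n Y z"
  unfolding SC_dyadic_def
proof (rule SUP_mono)
  fix ws assume ws: "ws \<in> dyadic_chains d2 \<alpha> n X z"
  define rep where "rep w = (SOME y. y \<in> Y \<and> dyadic_index n y = dyadic_index n w)" for w
  have rep: "rep w \<in> Y \<and> dyadic_index n (rep w) = dyadic_index n w" if "w \<in> set ws" for w
  proof -
    have "w \<in> X" "dyadic_index n w \<in> window d2 n"
      using ws that by (auto simp: dyadic_chains_def)
    then have "\<exists>y. y \<in> Y \<and> dyadic_index n y = dyadic_index n w"
      using assms by blast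
    then show ?thesis
      unfolding rep_def by (rule someI_ex)
  qed
  have "map (dyadic_index n) (map rep ws) = map (dyadic_index n) ws"
    using rep by simp
  then have "map rep ws \<in> dyadic_chains d2 \<alpha> n Y z"
    by (rule dyadic_chains_transfer[OF ws]) (use rep in auto)
  moreover have "snd (rep w) = snd w" if "w \<in> set ws" for w
    using rep[OF that] by (blast intro: snd_eq_if_dyadic_index_eq)
  then have "Vcost d2 z (map rep ws) = Vcost d2 z ws"
    by (intro Vcost_cong_snd) simp_all
  ultimately show "\<exists>ws'\<in>dyadic_chains d2 \<alpha> n Y z.
      ereal (real (length ws) - Vcost d2 z ws) \<le> ereal (real (length ws') - Vcost d2 z ws')"
    by (intro bexI[of _ "map rep ws"]) simp_all
qed

section \<open>Cell counts of the Poisson process\<close>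

definition cell :: "nat \<Rightarrow> real^'d1 \<Rightarrow> ('d1::finite \<Rightarrow> int) \<Rightarrow> (real^'d1) set" where
  "cell n a k = {p. \<forall>i. \<lfloor>2^n * (p $ i - a $ i)\<rfloor> = k i}"

text \<open>Restricting to the window makes the count vector range over the countable set
  \<open>window d2 n \<rightarrow>\<^sub>E UNIV\<close>.\<close>

definition cell_counts :: "nat \<Rightarrow> nat \<Rightarrow> real^'d1 \<Rightarrow> ('d1::finite) point set \<Rightarrow> ('d1 \<Rightarrow> int) \<times> (nat \<Rightarrow> int) \<Rightarrow> nat" where
  "cell_counts d2 n a X = restrict (\<lambda>j. card (X \<inter> (cell n a (fst j) \<times> {snd j}))) (window d2 n)"

definition cell_corner :: "nat \<Rightarrow> ('d1::finite \<Rightarrow> int) \<times> (nat \<Rightarrow> int) \<Rightarrow> 'd1 point" where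
  "cell_corner n j = ((\<chi> i. real_of_int (fst j i) / 2^n), snd j)"

definition occupied_corners :: "nat \<Rightarrow> nat \<Rightarrow> (('d1::finite \<Rightarrow> int) \<times> (nat \<Rightarrow> int) \<Rightarrow> nat) \<Rightarrow> 'd1 point set" where
  "occupied_corners d2 n cnt = cell_corner n ` {j \<in> window d2 n. 0 < cnt j}"

lemma dyadic_index_cell_corner [simp]: "dyadic_index n (cell_corner n j) = j"
  unfolding dyadic_index_def cell_corner_def by (cases j) auto

lemma mem_cell_0_iff: "w \<in> cell n 0 (fst j) \<times> {snd j} \<longleftrightarrow> dyadic_index n w = j"
  unfolding cell_def dyadic_index_def by (cases j; cases w) (auto simp: fun_eq_iff)

lemma SC_dyadic_eq_occupied_corners:
  assumes "\<forall>j\<in>window d2 n. finite (X \<inter> (cell n 0 (fst j) \<times> {snd j}))"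
  shows "SC_dyadic d2 \<alpha> n X z = SC_dyadic d2 \<alpha> n (occupied_corners d2 n (cell_counts d2 n 0 X)) z"
proof (rule antisym; rule SC_dyadic_le_if_cells_covered; intro ballI impI)
  fix w assume "w \<in> X" and j: "dyadic_index n w \<in> window d2 n"
  then have "0 < cell_counts d2 n 0 X (dyadic_index n w)"
    using assms mem_cell_0_iff[of w n "dyadic_index n w"] by (auto simp: cell_counts_def card_gt_0_iff)
  with j have "cell_corner n (dyadic_index n w) \<in> occupied_corners d2 n (cell_counts d2 n 0 X)"
    unfolding occupied_corners_def by blast
  then show "\<exists>y\<in>occupied_corners d2 n (cell_counts d2 n 0 X). dyadic_index n y = dyadic_index n w"
    using dyadic_index_cell_corner by blast
next
  fix y assume "y \<in> occupied_corners d2 n (cell_counts d2 n 0 X)"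
  then obtain j where "j \<in> window d2 n" "0 < cell_counts d2 n 0 X j" and y: "y = cell_corner n j"
    unfolding occupied_corners_def by blast
  then have "card (X \<inter> (cell n 0 (fst j) \<times> {snd j})) \<noteq> 0"
    by (simp add: cell_counts_def)
  then have "X \<inter> (cell n 0 (fst j) \<times> {snd j}) \<noteq> {}"
    by (metis card.empty)
  then obtain w where "w \<in> X" "w \<in> cell n 0 (fst j) \<times> {snd j}"
    by blast
  then have "w \<in> X" "dyadic_index n w = j"
    by (simp_all only: mem_cell_0_iff)
  then show "\<exists>w\<in>X. dyadic_index n w = dyadic_index n y"
    using y by auto
qed

lemma shift_config_Int_cell:
  "shift_config a X \<inter> (cell n 0 k \<times> {v}) = (\<lambda>w. (fst w - a, snd w)) ` (X \<inter> (cell n a k \<times> {v}))"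
  unfolding shift_config_def cell_def by auto

lemma cell_counts_shift_config: "cell_counts d2 n 0 (shift_config a X) = cell_counts d2 n a X"
proof -
  have "inj (\<lambda>w::'a point. (fst w - a, snd w))"
    by (auto simp: inj_def prod_eq_iff)
  then show ?thesis
    unfolding cell_counts_def shift_config_Int_cell by (intro restrict_ext) (simp add: card_image inj_on_subset)
qed

lemma finite_window: "finite (window d2 n :: (('d1::finite \<Rightarrow> int) \<times> (nat \<Rightarrow> int)) set)"
proof -
  let ?K = "PiE UNIV (\<lambda>_. {0..<int (Suc n) * 2^n}) :: ('d1 \<Rightarrow> int) set"
  let ?V = "(\<lambda>f l. if l < d2 then f l else 0) ` PiE {..<d2} (\<lambda>_. {- int n..int n})"
  have "window d2 n \<subseteq> ?K \<times> ?V"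
  proof (clarify)
    fix k :: "'d1 \<Rightarrow> int" and v assume j: "(k, v) \<in> window d2 n"
    then have "k \<in> ?K"
      by (simp add: window_def PiE_UNIV_domain)
    moreover have "restrict v {..<d2} \<in> PiE {..<d2} (\<lambda>_. {- int n..int n})"
      using j by (simp add: window_def abs_le_iff minus_le_iff)
    moreover have "v = (\<lambda>l. if l < d2 then restrict v {..<d2} l else 0)"
      using j by (auto simp: window_def Zd_def)
    ultimately show "k \<in> ?K \<and> v \<in> ?V"
      by blast
  qed
  then show ?thesis
    by (rule finite_subset) (intro finite_SigmaI finite_imageI finite_PiE; simp)
qed

lemma window_nonempty: "window d2 n \<noteq> {}"
proof -
  have "((\<lambda>_. 0), (\<lambda>_. 0)) \<in> window d2 n"
    by (simp add: window_def Zd_def)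
  then show ?thesis by blast
qed

lemma cell_sets_lborel: "cell n a k \<in> sets lborel"
proof -
  have "cell n a k = {p \<in> space borel. \<forall>i. \<lfloor>2^n * (p $ i - a $ i)\<rfloor> = k i}"
    unfolding cell_def by simp
  also have "\<dots> \<in> sets borel"
    by measurable
  finally show ?thesis by simp
qed

lemma bounded_cell: "bounded (cell n a k)"
proof -
  have "cell n a k \<subseteq> cbox (\<chi> i. a $ i + real_of_int (k i) / 2^n) (\<chi> i. a $ i + (real_of_int (k i) + 1) / 2^n)"
  proof
    fix p assume "p \<in> cell n a k"
    then have "\<lfloor>2^n * (p $ i - a $ i)\<rfloor> = k i" for i
      unfolding cell_def by simp
    then have "a $ i + real_of_int (k i) / 2^n \<le> p $ i \<and> p $ i \<le> a $ i + (real_of_int (k i) + 1) / 2^n" for i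
      using floor_dyadic_le[of n "p $ i - a $ i"] less_floor_dyadic_succ[of "p $ i - a $ i" n] by auto
    then show "p \<in> cbox (\<chi> i. a $ i + real_of_int (k i) / 2^n) (\<chi> i. a $ i + (real_of_int (k i) + 1) / 2^n)"
      by (simp add: mem_box_cart)
  qed
  then show ?thesis
    by (rule bounded_subset[OF bounded_cbox])
qed

lemma measure_cell: "measure lborel (cell n a k) = measure lborel (cell n 0 k)"
proof -
  have "emeasure lborel (cell n 0 k) = emeasure (distr lborel borel ((+) (-a))) (cell n 0 k)"
    by (simp add: lborel_distr_plus)
  also have "\<dots> = emeasure lborel (cell n a k)"
    using cell_sets_lborel[of n 0 k] by (subst emeasure_distr) (auto simp: cell_def)
  finally show ?thesis
    by (simp add: measure_def)
qed

lemma disjoint_cells: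
  "(k, v) \<noteq> (k', v') \<Longrightarrow> (cell n a k \<times> {v}) \<inter> (cell n a k' \<times> {v'}) = {}"
  unfolding cell_def by (auto simp: fun_eq_iff)

lemma poisson_pp_prob_space: "poisson_pp M d2 \<xi> \<Longrightarrow> prob_space M"
  unfolding poisson_pp_def by (rule conjunct1)

lemma poisson_pp_points:
  assumes "poisson_pp M d2 \<xi>" "\<omega> \<in> space M"
  shows "\<xi> \<omega> \<subseteq> UNIV \<times> Zd d2" and "bounded B \<Longrightarrow> finite (\<xi> \<omega> \<inter> (B \<times> {v}))"
proof -
  have "\<xi> \<omega> \<subseteq> UNIV \<times> Zd d2 \<and> (\<forall>B v. bounded B \<longrightarrow> finite (\<xi> \<omega> \<inter> (B \<times> {v})))"
    using assms(1) unfolding poisson_pp_def using assms(2) by (elim conjE) (erule bspec)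
  then show "\<xi> \<omega> \<subseteq> UNIV \<times> Zd d2" and "bounded B \<Longrightarrow> finite (\<xi> \<omega> \<inter> (B \<times> {v}))"
    by simp_all
qed

lemma poisson_pp_indep:
  fixes \<xi> :: "'b \<Rightarrow> ('d1::finite) point set" and I :: "nat set"
    and Bs :: "nat \<Rightarrow> (real^'d1) set" and vs :: "nat \<Rightarrow> nat \<Rightarrow> int"
  assumes "poisson_pp M d2 \<xi>" "finite I" "\<forall>i\<in>I. Bs i \<in> sets lborel \<and> bounded (Bs i) \<and> vs i \<in> Zd d2"
    "disjoint_family_on (\<lambda>i. Bs i \<times> {vs i}) I"
  shows "prob_space.indep_vars M (\<lambda>_. count_space UNIV) (\<lambda>i \<omega>. card (\<xi> \<omega> \<inter> (Bs i \<times> {vs i}))) I"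
  using assms(1) unfolding poisson_pp_def
  by (elim conjE) (drule spec[of _ I], drule spec[of _ Bs], drule spec[of _ vs], use assms(2-4) in simp)

lemma poisson_pp_count:
  assumes "poisson_pp M d2 \<xi>" "B \<in> sets lborel" "bounded B" "v \<in> Zd d2"
  shows "measure M {\<omega>\<in>space M. card (\<xi> \<omega> \<inter> (B \<times> {v})) = k} = poisson_prob (measure lborel B) k"
  using assms(1) unfolding poisson_pp_def
  by (elim conjE) (drule spec[of _ B], drule spec[of _ v], drule spec[of _ k], use assms(2-4) in simp)

lemma poisson_pp_joint_counts:
  fixes \<xi> :: "'b \<Rightarrow> ('d1::finite) point set" and J :: "'j set"
    and B :: "'j \<Rightarrow> (real^'d1) set" and v :: "'j \<Rightarrow> nat \<Rightarrow> int"
  assumes pp: "poisson_pp M d2 \<xi>" and J: "finite J" "J \<noteq> {}"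
    and B: "\<forall>j\<in>J. B j \<in> sets lborel \<and> bounded (B j) \<and> v j \<in> Zd d2"
    and disj: "disjoint_family_on (\<lambda>j. B j \<times> {v j}) J"
  shows "{\<omega> \<in> space M. \<forall>j\<in>J. card (\<xi> \<omega> \<inter> (B j \<times> {v j})) = c j} \<in> sets M"
    and "measure M {\<omega> \<in> space M. \<forall>j\<in>J. card (\<xi> \<omega> \<inter> (B j \<times> {v j})) = c j}
           = (\<Prod>j\<in>J. poisson_prob (measure lborel (B j)) (c j))"
proof -
  interpret prob_space M
    using pp by (rule poisson_pp_prob_space)
  define N where "N = card J"
  obtain h where h: "bij_betw h {0..<N} J"
    unfolding N_def using ex_bij_betw_nat_finite[OF J(1)] by blast
  have N: "0 < N"
    unfolding N_def using J by (simp add: card_gt_0_iff)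
  have hJ: "J = h ` {0..<N}" "inj_on h {0..<N}"
    using h by (simp_all add: bij_betw_def)
  define X where "X i \<omega> = card (\<xi> \<omega> \<inter> (B (h i) \<times> {v (h i)}))" for i \<omega>
  have "disjoint_family_on (\<lambda>i. B (h i) \<times> {v (h i)}) {0..<N}"
    using disj hJ unfolding disjoint_family_on_def inj_on_def by blast
  then have indep: "indep_vars (\<lambda>_. count_space UNIV) X {0..<N}"
    unfolding X_def by (intro poisson_pp_indep[OF pp]) (use B hJ(1) in auto)
  have events: "{\<omega> \<in> space M. X i \<omega> = c (h i)} \<in> sets M" if "i \<in> {0..<N}" for i
  proof -
    have "X i \<in> measurable M (count_space UNIV)"
      using indep that unfolding indep_vars_def2 by blast
    moreover have "{\<omega> \<in> space M. X i \<omega> = c (h i)} = X i -` {c (h i)} \<inter> space M"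
      by blast
    ultimately show ?thesis
      by (simp add: measurable_sets)
  qed
  have eq: "{\<omega> \<in> space M. \<forall>j\<in>J. card (\<xi> \<omega> \<inter> (B j \<times> {v j})) = c j}
      = (\<Inter>i\<in>{0..<N}. {\<omega> \<in> space M. X i \<omega> = c (h i)})"
    using N unfolding hJ(1) X_def Ball_image_comp by auto
  show "{\<omega> \<in> space M. \<forall>j\<in>J. card (\<xi> \<omega> \<inter> (B j \<times> {v j})) = c j} \<in> sets M"
    unfolding eq using events N by (intro sets.finite_INT) auto
  have "prob (\<Inter>i\<in>{0..<N}. {\<omega> \<in> space M. X i \<omega> = c (h i)})
      = (\<Prod>i\<in>{0..<N}. prob {\<omega> \<in> space M. X i \<omega> = c (h i)})"
    using indep_eventsI_indep_vars[OF indep, of "\<lambda>i k. k = c (h i)"] N unfolding indep_events_def by auto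
  also have "\<dots> = (\<Prod>i\<in>{0..<N}. poisson_prob (measure lborel (B (h i))) (c (h i)))"
    unfolding X_def using B hJ(1) by (intro prod.cong refl poisson_pp_count[OF pp]) auto
  also have "\<dots> = (\<Prod>j\<in>J. poisson_prob (measure lborel (B j)) (c j))"
    by (rule prod.reindex_bij_betw[OF h])
  finally show "prob {\<omega> \<in> space M. \<forall>j\<in>J. card (\<xi> \<omega> \<inter> (B j \<times> {v j})) = c j}
      = (\<Prod>j\<in>J. poisson_prob (measure lborel (B j)) (c j))"
    unfolding eq .
qed

lemma cell_counts_vimage:
  fixes \<xi> :: "'b \<Rightarrow> ('d1::finite) point set"
  assumes pp: "poisson_pp M d2 \<xi>" and cnt: "cnt \<in> PiE (window d2 n) (\<lambda>_. UNIV)"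
  shows "(\<lambda>\<omega>. cell_counts d2 n a (\<xi> \<omega>)) -` {cnt} \<inter> space M \<in> sets M"
    and "emeasure M ((\<lambda>\<omega>. cell_counts d2 n a (\<xi> \<omega>)) -` {cnt} \<inter> space M)
           = ennreal (\<Prod>j\<in>window d2 n. poisson_prob (measure lborel (cell n 0 (fst j))) (cnt j))"
proof -
  have "cell_counts d2 n a X = cnt \<longleftrightarrow> (\<forall>j\<in>window d2 n. card (X \<inter> (cell n a (fst j) \<times> {snd j})) = cnt j)" for X
    using cnt unfolding cell_counts_def by (auto simp: PiE_def extensional_def fun_eq_iff)
  then have eq: "(\<lambda>\<omega>. cell_counts d2 n a (\<xi> \<omega>)) -` {cnt} \<inter> space M
      = {\<omega> \<in> space M. \<forall>j\<in>window d2 n. card (\<xi> \<omega> \<inter> (cell n a (fst j) \<times> {snd j})) = cnt j}"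
    by blast
  have cells: "\<forall>j\<in>window d2 n. cell n a (fst j) \<in> sets lborel \<and> bounded (cell n a (fst j)) \<and> snd j \<in> Zd d2"
    by (intro ballI conjI cell_sets_lborel bounded_cell) (simp add: window_def)
  have disj: "disjoint_family_on (\<lambda>j. cell n a (fst j) \<times> {snd j}) (window d2 n)"
    unfolding disjoint_family_on_def by (metis disjoint_cells prod.collapse)
  note joint = poisson_pp_joint_counts[OF pp finite_window window_nonempty cells disj, of cnt]
  show "(\<lambda>\<omega>. cell_counts d2 n a (\<xi> \<omega>)) -` {cnt} \<inter> space M \<in> sets M"
    unfolding eq by (rule joint(1))
  then show "emeasure M ((\<lambda>\<omega>. cell_counts d2 n a (\<xi> \<omega>)) -` {cnt} \<inter> space M)
      = ennreal (\<Prod>j\<in>window d2 n. poisson_prob (measure lborel (cell n 0 (fst j))) (cnt j))"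
    using joint(2) finite_measure.emeasure_eq_measure[OF prob_space.finite_measure[OF poisson_pp_prob_space[OF pp]]]
    by (simp add: eq measure_cell[of n a])
qed

section \<open>Translation invariance of the expected reward\<close>

lemma measurable_cell_counts:
  fixes \<xi> :: "'b \<Rightarrow> ('d1::finite) point set"
  assumes "poisson_pp M d2 \<xi>"
  shows "(\<lambda>\<omega>. cell_counts d2 n a (\<xi> \<omega>)) \<in> measurable M (count_space (PiE (window d2 n) (\<lambda>_. UNIV)))"
proof (subst measurable_count_space_eq_countable)
  show "countable (PiE (window d2 n :: (('d1 \<Rightarrow> int) \<times> (nat \<Rightarrow> int)) set) (\<lambda>_. UNIV :: nat set))"
    by (intro countable_PiE finite_window) auto
  show "(\<lambda>\<omega>. cell_counts d2 n a (\<xi> \<omega>)) \<in> space M \<rightarrow> PiE (window d2 n) (\<lambda>_. UNIV) \<and>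
      (\<forall>cnt\<in>PiE (window d2 n) (\<lambda>_. UNIV). (\<lambda>\<omega>. cell_counts d2 n a (\<xi> \<omega>)) -` {cnt} \<inter> space M \<in> sets M)"
    using cell_counts_vimage(1)[OF assms] by (auto simp: cell_counts_def)
qed

lemma distr_cell_counts_eq_0:
  fixes \<xi> :: "'b \<Rightarrow> ('d1::finite) point set"
  assumes "poisson_pp M d2 \<xi>"
  shows "distr M (count_space (PiE (window d2 n) (\<lambda>_. UNIV))) (\<lambda>\<omega>. cell_counts d2 n a (\<xi> \<omega>))
       = distr M (count_space (PiE (window d2 n) (\<lambda>_. UNIV))) (\<lambda>\<omega>. cell_counts d2 n 0 (\<xi> \<omega>))"
    (is "distr M ?C _ = _")
proof (rule measure_eqI_countable)
  show "countable (PiE (window d2 n :: (('d1 \<Rightarrow> int) \<times> (nat \<Rightarrow> int)) set) (\<lambda>_. UNIV :: nat set))"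
    by (intro countable_PiE finite_window) auto
  fix cnt :: "('d1 \<Rightarrow> int) \<times> (nat \<Rightarrow> int) \<Rightarrow> nat"
  assume "cnt \<in> PiE (window d2 n) (\<lambda>_. UNIV)"
  then have "emeasure (distr M ?C (\<lambda>\<omega>. cell_counts d2 n b (\<xi> \<omega>))) {cnt}
      = ennreal (\<Prod>j\<in>window d2 n. poisson_prob (measure lborel (cell n 0 (fst j))) (cnt j))" for b
    by (subst emeasure_distr[OF measurable_cell_counts[OF assms]]) (auto simp: cell_counts_vimage(2)[OF assms])
  then show "emeasure (distr M ?C (\<lambda>\<omega>. cell_counts d2 n a (\<xi> \<omega>))) {cnt}
      = emeasure (distr M ?C (\<lambda>\<omega>. cell_counts d2 n 0 (\<xi> \<omega>))) {cnt}"
    by simp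
qed simp_all

lemma nn_integral_cell_counts_eq_0:
  fixes \<xi> :: "'b \<Rightarrow> ('d1::finite) point set"
  assumes "poisson_pp M d2 \<xi>"
  shows "(\<integral>\<^sup>+\<omega>. F (cell_counts d2 n a (\<xi> \<omega>)) \<partial>M) = (\<integral>\<^sup>+\<omega>. F (cell_counts d2 n 0 (\<xi> \<omega>)) \<partial>M)"
proof -
  let ?C = "count_space (PiE (window d2 n :: (('d1 \<Rightarrow> int) \<times> (nat \<Rightarrow> int)) set) (\<lambda>_. UNIV :: nat set))"
  have F: "F \<in> borel_measurable (distr M ?C T)" for T :: "'b \<Rightarrow> _"
  proof -
    have "borel_measurable (distr M ?C T) = borel_measurable ?C"
      by (rule measurable_cong_sets) simp_all
    then show ?thesis
      by simp
  qed
  have "(\<integral>\<^sup>+\<omega>. F (cell_counts d2 n a (\<xi> \<omega>)) \<partial>M) = integral\<^sup>N (distr M ?C (\<lambda>\<omega>. cell_counts d2 n a (\<xi> \<omega>))) F"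
    by (rule nn_integral_distr[symmetric, OF measurable_cell_counts[OF assms] F])
  also have "\<dots> = integral\<^sup>N (distr M ?C (\<lambda>\<omega>. cell_counts d2 n 0 (\<xi> \<omega>))) F"
    by (subst distr_cell_counts_eq_0[OF assms]) (rule refl)
  also have "\<dots> = (\<integral>\<^sup>+\<omega>. F (cell_counts d2 n 0 (\<xi> \<omega>)) \<partial>M)"
    by (rule nn_integral_distr[OF measurable_cell_counts[OF assms] F])
  finally show ?thesis .
qed

lemma shift_config_subset: "X \<subseteq> UNIV \<times> Zd d2 \<Longrightarrow> shift_config a X \<subseteq> UNIV \<times> Zd d2"
  unfolding shift_config_def by auto

lemma SC_dyadic_shift_config_eq_occupied_corners:
  assumes "\<And>k v. finite (X \<inter> (cell n a k \<times> {v}))"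
  shows "SC_dyadic d2 \<alpha> n (shift_config a X) z = SC_dyadic d2 \<alpha> n (occupied_corners d2 n (cell_counts d2 n a X)) z"
proof -
  have "\<forall>j\<in>window d2 n. finite (shift_config a X \<inter> (cell n 0 (fst j) \<times> {snd j}))"
    unfolding shift_config_Int_cell using assms by (blast intro: finite_imageI)
  then have "SC_dyadic d2 \<alpha> n (shift_config a X) z
      = SC_dyadic d2 \<alpha> n (occupied_corners d2 n (cell_counts d2 n 0 (shift_config a X))) z"
    by (rule SC_dyadic_eq_occupied_corners)
  then show ?thesis
    by (simp only: cell_counts_shift_config)
qed

lemma SC_dyadic_shift_config_poisson:
  fixes \<xi> :: "'b \<Rightarrow> ('d1::finite) point set"
  assumes "poisson_pp M d2 \<xi>" "\<omega> \<in> space M"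
  shows "SC_dyadic d2 \<alpha> n (shift_config a (\<xi> \<omega>)) z
       = SC_dyadic d2 \<alpha> n (occupied_corners d2 n (cell_counts d2 n a (\<xi> \<omega>))) z"
  by (rule SC_dyadic_shift_config_eq_occupied_corners) (rule poisson_pp_points(2)[OF assms bounded_cell])

lemma measurable_SC_dyadic_shift_config:
  fixes \<xi> :: "'b \<Rightarrow> ('d1::finite) point set"
  assumes "poisson_pp M d2 \<xi>"
  shows "(\<lambda>\<omega>. e2ennreal (SC_dyadic d2 \<alpha> n (shift_config a (\<xi> \<omega>)) z)) \<in> borel_measurable M"
proof -
  have "(\<lambda>\<omega>. e2ennreal (SC_dyadic d2 \<alpha> n (occupied_corners d2 n (cell_counts d2 n a (\<xi> \<omega>))) z)) \<in> borel_measurable M"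
    by (rule measurable_compose[OF measurable_cell_counts[OF assms]]) simp
  then show ?thesis
    by (rule measurable_cong[THEN iffD1, rotated]) (simp add: SC_dyadic_shift_config_poisson[OF assms])
qed

lemma measurable_SC_shift_config:
  fixes \<xi> :: "'b \<Rightarrow> ('d1::finite) point set"
  assumes "poisson_pp M d2 \<xi>" "\<alpha> \<ge> 0"
  shows "(\<lambda>\<omega>. e2ennreal (SC d2 \<alpha> (shift_config a (\<xi> \<omega>)) z)) \<in> borel_measurable M"
proof -
  have "(\<lambda>\<omega>. SUP n. e2ennreal (SC_dyadic d2 \<alpha> n (shift_config a (\<xi> \<omega>)) z)) \<in> borel_measurable M"
    using measurable_SC_dyadic_shift_config[OF assms(1)] by measurable
  then show ?thesis
    by (rule measurable_cong[THEN iffD1, rotated])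
       (simp add: e2ennreal_SC_eq_SUP_SC_dyadic assms(2) shift_config_subset poisson_pp_points(1)[OF assms(1)])
qed

lemma nn_integral_SC_shift_config:
  fixes \<xi> :: "'b \<Rightarrow> ('d1::finite) point set"
  assumes pp: "poisson_pp M d2 \<xi>" and "\<alpha> \<ge> 0"
  shows "(\<integral>\<^sup>+\<omega>. e2ennreal (SC d2 \<alpha> (shift_config a (\<xi> \<omega>)) z) \<partial>M) = (\<integral>\<^sup>+\<omega>. e2ennreal (SC d2 \<alpha> (\<xi> \<omega>) z) \<partial>M)"
proof -
  define F where "F n cnt = e2ennreal (SC_dyadic d2 \<alpha> n (occupied_corners d2 n cnt) z)" for n cnt
  have limit: "(\<integral>\<^sup>+\<omega>. e2ennreal (SC d2 \<alpha> (shift_config b (\<xi> \<omega>)) z) \<partial>M)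
      = (SUP n. (\<integral>\<^sup>+\<omega>. F n (cell_counts d2 n b (\<xi> \<omega>)) \<partial>M))" for b
  proof -
    have "(\<integral>\<^sup>+\<omega>. e2ennreal (SC d2 \<alpha> (shift_config b (\<xi> \<omega>)) z) \<partial>M)
        = (\<integral>\<^sup>+\<omega>. (SUP n. e2ennreal (SC_dyadic d2 \<alpha> n (shift_config b (\<xi> \<omega>)) z)) \<partial>M)"
      by (intro nn_integral_cong e2ennreal_SC_eq_SUP_SC_dyadic assms(2) shift_config_subset)
         (rule poisson_pp_points(1)[OF pp])
    also have "\<dots> = (SUP n. (\<integral>\<^sup>+\<omega>. e2ennreal (SC_dyadic d2 \<alpha> n (shift_config b (\<xi> \<omega>)) z) \<partial>M))"
    proof (rule nn_integral_monotone_convergence_SUP[OF _ measurable_SC_dyadic_shift_config[OF pp]])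
      show "incseq (\<lambda>n \<omega>. e2ennreal (SC_dyadic d2 \<alpha> n (shift_config b (\<xi> \<omega>)) z))"
        using incseq_SC_dyadic unfolding incseq_def le_fun_def by (blast intro: e2ennreal_mono)
    qed
    also have "\<dots> = (SUP n. (\<integral>\<^sup>+\<omega>. F n (cell_counts d2 n b (\<xi> \<omega>)) \<partial>M))"
      unfolding F_def by (intro SUP_cong refl nn_integral_cong) (simp add: SC_dyadic_shift_config_poisson[OF pp])
    finally show ?thesis .
  qed
  have "(\<integral>\<^sup>+\<omega>. e2ennreal (SC d2 \<alpha> (shift_config a (\<xi> \<omega>)) z) \<partial>M)
      = (SUP n. (\<integral>\<^sup>+\<omega>. F n (cell_counts d2 n 0 (\<xi> \<omega>)) \<partial>M))"
    unfolding limit by (intro SUP_cong refl nn_integral_cell_counts_eq_0[OF pp])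
  also have "\<dots> = (\<integral>\<^sup>+\<omega>. e2ennreal (SC d2 \<alpha> (shift_config 0 (\<xi> \<omega>)) z) \<partial>M)"
    by (rule limit[symmetric])
  also have "\<dots> = (\<integral>\<^sup>+\<omega>. e2ennreal (SC d2 \<alpha> (\<xi> \<omega>) z) \<partial>M)"
    by (simp only: shift_config_0)
  finally show ?thesis .
qed

section \<open>Superadditivity and the limit\<close>

lemma superadditive_mono:
  fixes f :: "real \<Rightarrow> ennreal"
  assumes super: "\<And>s t. 0 < s \<Longrightarrow> 0 < t \<Longrightarrow> f s + f t \<le> f (s + t)" and "0 < s" "s \<le> t"
  shows "f s \<le> f t"
proof (cases "s = t")
  case False
  then have "f s + f (t - s) \<le> f t"
    using super[of s "t - s"] assms(2,3) by simp
  then show ?thesis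
    by (rule order_trans[rotated]) simp
qed simp

lemma superadditive_of_nat_mult:
  fixes f :: "real \<Rightarrow> ennreal"
  assumes super: "\<And>s t. 0 < s \<Longrightarrow> 0 < t \<Longrightarrow> f s + f t \<le> f (s + t)" and s: "0 < s"
  shows "of_nat (Suc n) * f s \<le> f (real (Suc n) * s)"
proof (induction n)
  case (Suc n)
  have "of_nat (Suc (Suc n)) * f s = of_nat (Suc n) * f s + f s"
    by (simp add: algebra_simps)
  also have "\<dots> \<le> f (real (Suc n) * s) + f s"
    using Suc by (rule add_right_mono)
  also have "\<dots> \<le> f (real (Suc n) * s + s)"
    using s by (intro super) auto
  finally show ?case
    by (simp add: algebra_simps)
qed simp

lemma superadditive_floor_mult:
  fixes f :: "real \<Rightarrow> ennreal"
  assumes super: "\<And>s t. 0 < s \<Longrightarrow> 0 < t \<Longrightarrow> f s + f t \<le> f (s + t)" and "0 < s" "s \<le> t"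
  shows "of_nat (nat \<lfloor>t / s\<rfloor>) * f s \<le> f t"
proof -
  have "1 \<le> t / s"
    using assms(2,3) by simp
  then have "0 < nat \<lfloor>t / s\<rfloor>"
    by simp
  then obtain m where m: "nat \<lfloor>t / s\<rfloor> = Suc m"
    using gr0_implies_Suc by blast
  have "real (nat \<lfloor>t / s\<rfloor>) * s \<le> t"
    using of_nat_floor[of "t / s"] \<open>1 \<le> t / s\<close> assms(2) by (simp add: le_divide_eq)
  then have "f (real (Suc m) * s) \<le> f t"
    using assms(2) m by (intro superadditive_mono[OF super]) auto
  with superadditive_of_nat_mult[OF super assms(2), of m] show ?thesis
    unfolding m by (rule order_trans)
qed

lemma superadditive_div_ge:
  fixes f :: "real \<Rightarrow> ennreal"
  assumes super: "\<And>s t. 0 < s \<Longrightarrow> 0 < t \<Longrightarrow> f s + f t \<le> f (s + t)"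
    and s: "0 < s" "s \<le> t" and q: "f s = ennreal q" "0 \<le> q"
  shows "ennreal (q / s - q / t) \<le> f t / ennreal t"
proof -
  have t: "0 < t"
    using s by simp
  have "1 \<le> t / s"
    using s by simp
  then have "t / s - 1 \<le> real (nat \<lfloor>t / s\<rfloor>)"
    by linarith
  then have "(t / s - 1) * q \<le> real (nat \<lfloor>t / s\<rfloor>) * q"
    using q(2) by (rule mult_right_mono)
  then have "ennreal ((t / s - 1) * q) \<le> ennreal (real (nat \<lfloor>t / s\<rfloor>) * q)"
    by (rule ennreal_leI)
  also have "\<dots> = of_nat (nat \<lfloor>t / s\<rfloor>) * f s"
    using q by (simp add: ennreal_mult ennreal_of_nat_eq_real_of_nat)
  also have "\<dots> \<le> f t"
    by (rule superadditive_floor_mult[OF super s])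
  finally have "ennreal ((t / s - 1) * q) / ennreal t \<le> f t / ennreal t"
    by (rule divide_right_mono_ennreal)
  moreover have "ennreal ((t / s - 1) * q) / ennreal t = ennreal (q / s - q / t)"
    using t s q(2) by (subst divide_ennreal) (auto simp: field_simps intro: mult_left_mono)
  ultimately show ?thesis
    by simp
qed

lemma superadditive_tendsto_SUP:
  fixes f :: "real \<Rightarrow> ennreal"
  assumes super: "\<And>s t. 0 < s \<Longrightarrow> 0 < t \<Longrightarrow> f s + f t \<le> f (s + t)"
  shows "((\<lambda>t. f t / ennreal t) \<longlongrightarrow> (SUP t\<in>{0<..}. f t / ennreal t)) at_top"
proof (rule order_tendstoI)
  let ?L = "SUP t\<in>{0<..}. f t / ennreal t"
  fix y assume "?L < y"
  show "\<forall>\<^sub>F t in at_top. f t / ennreal t < y"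
    using eventually_gt_at_top[of 0]
  proof (rule eventually_mono)
    fix t :: real assume "0 < t"
    then have "f t / ennreal t \<le> ?L"
      by (intro SUP_upper) auto
    then show "f t / ennreal t < y"
      using \<open>?L < y\<close> by (rule le_less_trans)
  qed
next
  let ?L = "SUP t\<in>{0<..}. f t / ennreal t"
  fix y assume "y < ?L"
  then obtain s where s: "0 < s" and ys: "y < f s / ennreal s"
    by (auto simp: less_SUP_iff)
  show "\<forall>\<^sub>F t in at_top. y < f t / ennreal t"
  proof (cases "f s = top")
    case True
    then have top: "f t = top" if "s \<le> t" for t
      using superadditive_mono[OF super s that] by (simp add: top_unique)
    have "y < top"
      using ys True by (auto simp: ennreal_top_divide)
    show ?thesis
      using eventually_ge_at_top[of s]
    proof (rule eventually_mono)
      fix t assume "s \<le> t"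
      then show "y < f t / ennreal t"
        using top \<open>y < top\<close> by (simp add: ennreal_top_divide)
    qed
  next
    case False
    define q where "q = enn2real (f s)"
    have q: "f s = ennreal q" "0 \<le> q"
      unfolding q_def using False by (simp_all add: ennreal_enn2real_if less_top)
    then obtain y' where y': "y = ennreal y'" "y' < q / s" "0 \<le> y'"
      using ys divide_ennreal[OF q(2) s] by (cases y) (auto simp: ennreal_less_iff)
    have "((\<lambda>t. q / s - q / t) \<longlongrightarrow> q / s - 0) at_top"
      by (intro tendsto_diff tendsto_const tendsto_divide_0[OF tendsto_const filterlim_at_top_imp_at_infinity[OF filterlim_ident]])
    then have "\<forall>\<^sub>F t in at_top. y' < q / s - q / t"
      using y'(2) by (intro order_tendstoD(1)) auto
    then show ?thesis
      using eventually_ge_at_top[of s]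
    proof eventually_elim
      case (elim t)
      then have "ennreal y' < ennreal (q / s - q / t)"
        using elim y'(3) by (simp add: ennreal_lessI)
      also have "\<dots> \<le> f t / ennreal t"
        by (rule superadditive_div_ge[OF super s elim(2) q])
      finally show ?case
        unfolding y'(1) .
    qed
  qed
qed

lemma ESC_superadditive:
  fixes \<xi> :: "'b \<Rightarrow> ('d1::finite) point set"
  assumes pp: "poisson_pp M d2 \<xi>" and "\<alpha> \<ge> 0" and "\<forall>i. 0 \<le> a $ i" "\<forall>i. 0 \<le> b $ i"
  shows "ESC M d2 \<xi> \<alpha> (a, \<lambda>_. 0) + ESC M d2 \<xi> \<alpha> (b, \<lambda>_. 0) \<le> ESC M d2 \<xi> \<alpha> (a + b, \<lambda>_. 0)"
proof -
  have "ESC M d2 \<xi> \<alpha> (a, \<lambda>_. 0) + ESC M d2 \<xi> \<alpha> (b, \<lambda>_. 0)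
     = (\<integral>\<^sup>+\<omega>. e2ennreal (SC d2 \<alpha> (\<xi> \<omega>) (a, \<lambda>_. 0)) \<partial>M)
       + (\<integral>\<^sup>+\<omega>. e2ennreal (SC d2 \<alpha> (shift_config a (\<xi> \<omega>)) (b, \<lambda>_. 0)) \<partial>M)"
    unfolding ESC_def nn_integral_SC_shift_config[OF pp assms(2)] ..
  also have "\<dots> = (\<integral>\<^sup>+\<omega>. e2ennreal (SC d2 \<alpha> (\<xi> \<omega>) (a, \<lambda>_. 0))
      + e2ennreal (SC d2 \<alpha> (shift_config a (\<xi> \<omega>)) (b, \<lambda>_. 0)) \<partial>M)"
    using measurable_SC_shift_config[OF pp assms(2), of 0] measurable_SC_shift_config[OF pp assms(2), of a]
    by (intro nn_integral_add[symmetric]) simp_all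
  also have "\<dots> \<le> (\<integral>\<^sup>+\<omega>. e2ennreal (SC d2 \<alpha> (\<xi> \<omega>) (a + b, \<lambda>_. 0)) \<partial>M)"
  proof (intro nn_integral_mono)
    fix \<omega>
    have "e2ennreal (SC d2 \<alpha> (\<xi> \<omega>) (a, \<lambda>_. 0)) + e2ennreal (SC d2 \<alpha> (shift_config a (\<xi> \<omega>)) (b, \<lambda>_. 0))
        = e2ennreal (SC d2 \<alpha> (\<xi> \<omega>) (a, \<lambda>_. 0) + SC d2 \<alpha> (shift_config a (\<xi> \<omega>)) (b, \<lambda>_. 0))"
      using SC_nonneg[of d2 \<alpha> "\<xi> \<omega>" a] SC_nonneg[of d2 \<alpha> "shift_config a (\<xi> \<omega>)" b]
      by (cases "SC d2 \<alpha> (\<xi> \<omega>) (a, \<lambda>_. 0)"; cases "SC d2 \<alpha> (shift_config a (\<xi> \<omega>)) (b, \<lambda>_. 0)")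
         (auto simp: ennreal_plus)
    also have "\<dots> \<le> e2ennreal (SC d2 \<alpha> (\<xi> \<omega>) (a + b, \<lambda>_. 0))"
      by (intro e2ennreal_mono SC_superadditive assms(3,4))
    finally show "e2ennreal (SC d2 \<alpha> (\<xi> \<omega>) (a, \<lambda>_. 0)) + e2ennreal (SC d2 \<alpha> (shift_config a (\<xi> \<omega>)) (b, \<lambda>_. 0))
        \<le> e2ennreal (SC d2 \<alpha> (\<xi> \<omega>) (a + b, \<lambda>_. 0))" .
  qed
  finally show ?thesis
    unfolding ESC_def .
qed

lemma eventually_scaled_gt:
  fixes x :: "real^'n"
  assumes "\<forall>i. 0 < x $ i"
  shows "\<forall>\<^sub>F t in at_top. \<forall>i. r < t * x $ i"
proof (intro eventually_all_finite allI)
  fix i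
  show "\<forall>\<^sub>F t in at_top. r < t * x $ i"
    using eventually_gt_at_top[of "r / x $ i"] by (rule eventually_mono) (use assms in \<open>simp add: pos_divide_less_eq\<close>)
qed

lemma SC_ge_one_if_particle:
  fixes X :: "('d1::finite) point set"
  assumes "w \<in> X" "snd w = (\<lambda>_. 0)" "\<forall>i. 0 \<le> fst w $ i" "\<forall>i. fst w $ i + \<alpha> powr (1 / real CARD('d1)) < y $ i"
  shows "1 \<le> SC d2 \<alpha> X (y, \<lambda>_. 0)"
proof -
  have "[w] \<in> chains \<alpha> X (y, \<lambda>_. 0)"
    using assms by (simp add: chains_def preceq_def prec_def)
  moreover have "Vcost d2 (y, \<lambda>_. 0) [w] = 0"
    using assms(2) by (simp add: Vcost_eq_path_cost l1norm_def)
  ultimately show ?thesis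
    using SC_ge_chain[of "[w]" \<alpha> X "(y, \<lambda>_. 0)" d2] by (simp add: one_ereal_def)
qed

lemma One_vec_nth [simp]: "(One :: real^'n) $ i = 1"
proof -
  have "One \<bullet> axis i (1::real) = 1"
    by (rule inner_sum_Basis) simp
  then show ?thesis
    by (simp only: cart_eq_inner_axis[of One i])
qed

lemma measure_unit_box: "measure lborel (box (0 :: real^'n) One) = 1"
  by (simp add: measure_lborel_box_eq)

lemma unit_box_occupied:
  fixes \<xi> :: "'b \<Rightarrow> ('d1::finite) point set"
  assumes pp: "poisson_pp M d2 \<xi>"
  shows "{\<omega> \<in> space M. \<xi> \<omega> \<inter> (box 0 One \<times> {\<lambda>_. 0}) \<noteq> {}} \<in> sets M"
    and "emeasure M {\<omega> \<in> space M. \<xi> \<omega> \<inter> (box 0 One \<times> {\<lambda>_. 0}) \<noteq> {}} = ennreal (1 - exp (- 1))"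
proof -
  interpret prob_space M
    using pp by (rule poisson_pp_prob_space)
  define E0 where "E0 = {\<omega> \<in> space M. card (\<xi> \<omega> \<inter> (box (0::real^'d1) One \<times> {\<lambda>_. 0})) = 0}"
  have "prob E0 = exp (- 1)"
    unfolding E0_def using poisson_pp_count[OF pp _ bounded_box, of 0 One "\<lambda>_. 0" 0]
    by (simp add: poisson_prob_def measure_unit_box Zd_def)
  then have E0: "E0 \<in> sets M"
    using measure_notin_sets[of E0 M] by (cases "E0 \<in> sets M") simp_all
  have "{\<omega> \<in> space M. \<xi> \<omega> \<inter> (box 0 One \<times> {\<lambda>_. 0}) \<noteq> {}} = space M - E0"
    unfolding E0_def using poisson_pp_points(2)[OF pp _ bounded_box] by auto
  with E0 \<open>prob E0 = exp (- 1)\<close>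
  show "{\<omega> \<in> space M. \<xi> \<omega> \<inter> (box 0 One \<times> {\<lambda>_. 0}) \<noteq> {}} \<in> sets M"
    and "emeasure M {\<omega> \<in> space M. \<xi> \<omega> \<inter> (box 0 One \<times> {\<lambda>_. 0}) \<noteq> {}} = ennreal (1 - exp (- 1))"
    by (simp_all add: emeasure_eq_measure prob_compl)
qed

lemma ESC_pos:
  fixes \<xi> :: "'b \<Rightarrow> ('d1::finite) point set"
  assumes pp: "poisson_pp M d2 \<xi>" and x: "\<forall>i. 0 < x $ i"
  shows "\<exists>t>0. 0 < ESC M d2 \<xi> \<alpha> (t *\<^sub>R x, \<lambda>_. 0)"
proof -
  let ?c = "\<alpha> powr (1 / real CARD('d1))"
  let ?E = "{\<omega> \<in> space M. \<xi> \<omega> \<inter> (box 0 One \<times> {\<lambda>_. 0}) \<noteq> {}}"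
  have "\<forall>\<^sub>F t in at_top. 0 < t \<and> (\<forall>i. 1 + ?c < t * x $ i)"
    by (intro eventually_conj eventually_gt_at_top eventually_scaled_gt x)
  then obtain t where t: "0 < t" "\<forall>i. 1 + ?c < t * x $ i"
    unfolding eventually_at_top_linorder by (meson order_refl)
  have "indicator ?E \<omega> \<le> e2ennreal (SC d2 \<alpha> (\<xi> \<omega>) (t *\<^sub>R x, \<lambda>_. 0))" for \<omega>
  proof (cases "\<omega> \<in> ?E")
    case True
    then obtain w where w: "w \<in> \<xi> \<omega>" "fst w \<in> box 0 One" "snd w = (\<lambda>_. 0)"
      by fastforce
    have "0 \<le> fst w $ i \<and> fst w $ i + ?c < (t *\<^sub>R x) $ i" for i
    proof -
      have "0 < fst w $ i" "fst w $ i < 1"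
        using w(2) unfolding mem_box_cart One_vec_nth zero_index by auto
      moreover have "(t *\<^sub>R x) $ i = t * x $ i"
        by simp
      ultimately show ?thesis
        using t(2)[rule_format, of i] by linarith
    qed
    then have "1 \<le> SC d2 \<alpha> (\<xi> \<omega>) (t *\<^sub>R x, \<lambda>_. 0)"
      using w by (intro SC_ge_one_if_particle) auto
    then show ?thesis
      using True e2ennreal_mono[of 1] by (simp add: one_ereal_def)
  qed simp
  then have "(\<integral>\<^sup>+\<omega>. indicator ?E \<omega> \<partial>M) \<le> ESC M d2 \<xi> \<alpha> (t *\<^sub>R x, \<lambda>_. 0)"
    unfolding ESC_def by (rule nn_integral_mono)
  then have "ennreal (1 - exp (- 1)) \<le> ESC M d2 \<xi> \<alpha> (t *\<^sub>R x, \<lambda>_. 0)"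
    using unit_box_occupied[OF pp] by simp
  moreover have "0 < ennreal (1 - exp (- 1))"
    by simp
  ultimately show ?thesis
    using t(1) by (metis order_less_le_trans)
qed

theorem mainTheorem8:
  fixes M :: "'a measure" and d2 :: nat and \<xi> :: "'a \<Rightarrow> ('d1::finite) point set"
    and x :: "real^'d1" and \<alpha> :: real
  assumes "poisson_pp M d2 \<xi>"
    and "\<forall>i. x $ i > 0"
    and "\<alpha> \<ge> 0"
  shows "((\<lambda>t::real. ESC M d2 \<xi> \<alpha> (t *\<^sub>R x, (\<lambda>_. 0)) / ennreal t) \<longlongrightarrow>
            (SUP t\<in>{0<..}. ESC M d2 \<xi> \<alpha> (t *\<^sub>R x, (\<lambda>_. 0)) / ennreal t)) at_top
         \<and> (SUP t\<in>{0<..}. ESC M d2 \<xi> \<alpha> (t *\<^sub>R x, (\<lambda>_. 0)) / ennreal t) > 0"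
proof
  have "ESC M d2 \<xi> \<alpha> (s *\<^sub>R x, \<lambda>_. 0) + ESC M d2 \<xi> \<alpha> (t *\<^sub>R x, \<lambda>_. 0) \<le> ESC M d2 \<xi> \<alpha> ((s + t) *\<^sub>R x, \<lambda>_. 0)"
    if "0 < s" "0 < t" for s t
    unfolding scaleR_add_left using that assms(2)
    by (intro ESC_superadditive assms(1,3)) (auto simp: less_imp_le)
  then show "((\<lambda>t::real. ESC M d2 \<xi> \<alpha> (t *\<^sub>R x, (\<lambda>_. 0)) / ennreal t) \<longlongrightarrow>
      (SUP t\<in>{0<..}. ESC M d2 \<xi> \<alpha> (t *\<^sub>R x, (\<lambda>_. 0)) / ennreal t)) at_top"
    by (rule superadditive_tendsto_SUP)
  obtain t where "0 < t" "0 < ESC M d2 \<xi> \<alpha> (t *\<^sub>R x, \<lambda>_. 0)"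
    using ESC_pos[OF assms(1,2)] by blast
  then show "(SUP t\<in>{0<..}. ESC M d2 \<xi> \<alpha> (t *\<^sub>R x, (\<lambda>_. 0)) / ennreal t) > 0"
    by (auto simp: less_SUP_iff ennreal_zero_less_divide)
qed

end
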